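(* Let $V$ be a vector configuration and $W\subseteq V$ a subconfiguration such that $\operatorname{lin}(W)\cap V=W$ (i.e. the elements of $V$ lying in $\operatorname{lin}(W)$ are exactly those of $W$). Then $\mathrm{DD}(V)\ge\mathrm{DD}(W)+\mathrm{DD}(V/W)$.
   Context: A vector configuration is a finite family (repetitions allowed) $V$ of vectors in $\mathbb{R}^r$; a subconfiguration is a subfamily, and cardinalities count multiplicities. The quotient $V/W$ is the vector configuration in $\mathbb{R}^r/\operatorname{lin}(W)$ formed by the images of the elements of $V\setminus W$ under the canonical projection. Covector discrepancy: for a configuration $U$ in a real vector space $E$, $\mathrm{DD}(U)=\max_f\big|\,|\{u\in U: f(u)>0\}|-|\{u\in U:f(u)<0\}|\,\big|$ over all linear functionals $f$ on $E$. *)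

theory Defs
  imports "HOL-Analysis.Analysis"
begin

text \<open>A vector configuration is a finite family (repetitions allowed), represented
  as a finite index set I together with a map v from indices to vectors.
  A subconfiguration is given by a subset J of the index set.\<close>

definition disc :: "('i \<Rightarrow> 'a) \<Rightarrow> 'i set \<Rightarrow> ('a \<Rightarrow> real) \<Rightarrow> nat" where
  "disc v I f = nat \<bar>int (card {i \<in> I. f (v i) > 0}) - int (card {i \<in> I. f (v i) < 0})\<bar>"

definition DD :: "('i \<Rightarrow> 'a::real_vector) \<Rightarrow> 'i set \<Rightarrow> nat" where
  "DD v I = Max {disc v I f | f. linear f}"

text \<open>The quotient lives in 'a / lin(W); linear functionals on
  that quotient correspond exactly to linear functionals on 'a vanishing on lin(W),
  and the quotient configuration consists of the images of v i for i in I - J.\<close>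
definition DD_quot :: "('i \<Rightarrow> 'a::real_vector) \<Rightarrow> 'i set \<Rightarrow> 'i set \<Rightarrow> nat" where
  "DD_quot v I J = Max {disc v (I - J) f | f. linear f \<and> (\<forall>x \<in> span (v ` J). f x = 0)}"

end

theory Submission
  imports Defs
begin

text \<open>Choose a functional f attaining DD(W) and a functional g on the quotient attaining DD(V/W).
  First perturb g by a small multiple of a functional that vanishes on lin(W) but on no element
  of V \ W (it exists because lin(W) \<inter> V = W); with the right sign this does not decrease the
  count on V \ W, and afterwards g is nonzero exactly on V \ W. Then g + s f for small s > 0
  has the signs of g on V \ W and the signs of f on W, so its signed count on V is
  DD(V/W) + DD(W).\<close>

definition signed_count :: "('i \<Rightarrow> 'a) \<Rightarrow> 'i set \<Rightarrow> ('a \<Rightarrow> real) \<Rightarrow> int" where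
  "signed_count v I f = int (card {i \<in> I. f (v i) > 0}) - int (card {i \<in> I. f (v i) < 0})"

lemma disc_eq_abs_signed_count: "int (disc v I f) = \<bar>signed_count v I f\<bar>"
  by (simp add: disc_def signed_count_def)

lemma card_filter_partition:
  assumes "finite X"
  shows "card {i \<in> X. Q i} = card {i \<in> {i \<in> X. P i}. Q i} + card {i \<in> {i \<in> X. \<not> P i}. Q i}"
proof -
  have "{i \<in> X. Q i} = {i \<in> {i \<in> X. P i}. Q i} \<union> {i \<in> {i \<in> X. \<not> P i}. Q i}" by auto
  then show ?thesis
    using assms by (simp add: card_Un_disjoint disjoint_iff)
qed

lemma signed_count_partition:
  assumes "finite X"
  shows "signed_count v X f = signed_count v {i \<in> X. P i} f + signed_count v {i \<in> X. \<not> P i} f"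
  unfolding signed_count_def
    card_filter_partition[OF assms, of "\<lambda>i. f (v i) > 0" P]
    card_filter_partition[OF assms, of "\<lambda>i. f (v i) < 0" P]
  by simp

lemma signed_count_cong_sgn:
  assumes "\<And>i. i \<in> X \<Longrightarrow> sgn (f (v i)) = sgn (g (v i))"
  shows "signed_count v X f = signed_count v X g"
proof -
  have "{i \<in> X. f (v i) > 0} = {i \<in> X. g (v i) > 0}" "{i \<in> X. f (v i) < 0} = {i \<in> X. g (v i) < 0}"
    using assms by (metis sgn_greater sgn_less)+
  then show ?thesis by (simp add: signed_count_def)
qed

lemma signed_count_vanishing:
  assumes "\<And>i. i \<in> X \<Longrightarrow> f (v i) = 0"
  shows "signed_count v X f = 0"
  using signed_count_cong_sgn[of X f v "\<lambda>_. 0"] assms by (simp add: signed_count_def)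

lemma signed_count_restrict_nonzero:
  assumes "finite X"
  shows "signed_count v X g = signed_count v {i \<in> X. g (v i) \<noteq> 0} g"
  using signed_count_partition[OF assms, of v g "\<lambda>i. g (v i) \<noteq> 0"]
    signed_count_vanishing[of "{i \<in> X. \<not> g (v i) \<noteq> 0}" g v] by simp

lemma signed_count_uminus: "signed_count v X (\<lambda>x. - f x) = - signed_count v X f"
  by (simp add: signed_count_def)

lemma linear_sign_choice:
  fixes f :: "'a::real_vector \<Rightarrow> real"
  assumes "linear f"
  obtains f' where "linear f'" "signed_count v X f' = \<bar>signed_count v X f\<bar>"
    "\<And>x. f' x = 0 \<longleftrightarrow> f x = 0"
proof (cases "signed_count v X f \<ge> 0")
  case True
  then show ?thesis using assms that[of f] by simp
next
  case False
  then show ?thesis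
    using that[of "\<lambda>x. - f x"] linear_compose_neg[OF assms] by (simp add: signed_count_uminus)
qed

lemma small_perturbation_sgn:
  fixes g k :: "'a \<Rightarrow> real"
  assumes "finite X"
  obtains t :: real where "t > 0"
    "\<And>i. i \<in> X \<Longrightarrow> sgn (g (v i) + t * k (v i)) = (if g (v i) = 0 then sgn (k (v i)) else sgn (g (v i)))"
proof -
  define T where "T = insert 1 ((\<lambda>i. \<bar>g (v i)\<bar> / (\<bar>k (v i)\<bar> + 1)) ` {i \<in> X. g (v i) \<noteq> 0})"
  have "finite T" "\<forall>x\<in>T. x > 0"
    using assms by (auto simp: T_def)
  then have "Min T > 0"
    by (simp add: T_def)
  moreover have "sgn (g (v i) + Min T * k (v i)) = sgn (g (v i))" if "i \<in> X" "g (v i) \<noteq> 0" for i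
  proof -
    have "Min T \<le> \<bar>g (v i)\<bar> / (\<bar>k (v i)\<bar> + 1)"
      using \<open>finite T\<close> that by (auto simp: T_def)
    then have "Min T * (\<bar>k (v i)\<bar> + 1) \<le> \<bar>g (v i)\<bar>"
      by (simp add: pos_le_divide_eq add_pos_nonneg)
    then have "\<bar>Min T * k (v i)\<bar> < \<bar>g (v i)\<bar>"
      using \<open>Min T > 0\<close> by (simp add: abs_mult algebra_simps)
    then show ?thesis
      by (auto simp: sgn_if abs_if split: if_splits)
  qed
  ultimately show ?thesis
    using that[of "Min T"] by (simp add: sgn_mult)
qed

lemma small_perturbation_signed_count:
  fixes g k :: "'a \<Rightarrow> real"
  assumes "finite X"
  obtains t :: real where "t > 0"
    "\<And>i. i \<in> X \<Longrightarrow> sgn (g (v i) + t * k (v i)) = (if g (v i) = 0 then sgn (k (v i)) else sgn (g (v i)))"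
    "signed_count v X (\<lambda>x. g x + t * k x) = signed_count v X g + signed_count v {i \<in> X. g (v i) = 0} k"
proof -
  obtain t :: real where t: "t > 0"
    "\<And>i. i \<in> X \<Longrightarrow> sgn (g (v i) + t * k (v i)) = (if g (v i) = 0 then sgn (k (v i)) else sgn (g (v i)))"
    using small_perturbation_sgn[OF assms] by metis
  let ?h = "\<lambda>x. g x + t * k x"
  have "signed_count v X ?h = signed_count v {i \<in> X. g (v i) = 0} ?h + signed_count v {i \<in> X. g (v i) \<noteq> 0} ?h"
    using signed_count_partition[OF assms, of v ?h "\<lambda>i. g (v i) = 0"] by simp
  also have "\<dots> = signed_count v {i \<in> X. g (v i) = 0} k + signed_count v {i \<in> X. g (v i) \<noteq> 0} g"
    using t by (intro arg_cong2[where f = "(+)"] signed_count_cong_sgn) (auto simp: sgn_mult)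
  also have "signed_count v {i \<in> X. g (v i) \<noteq> 0} g = signed_count v X g"
    by (rule signed_count_restrict_nonzero[OF assms, symmetric])
  finally show ?thesis
    using that t by simp
qed

lemma linear_functional_avoiding:
  fixes S :: "'a::euclidean_space set"
  assumes "finite U" "U \<inter> span S = {}"
  obtains k :: "'a \<Rightarrow> real" where "linear k" "\<And>x. x \<in> span S \<Longrightarrow> k x = 0" "\<And>u. u \<in> U \<Longrightarrow> k u \<noteq> 0"
  using assms
proof (induction U arbitrary: thesis rule: finite_induct)
  case empty
  show ?case using empty(1)[of "\<lambda>_. 0"] by (simp add: linear_iff)
next
  case (insert u U)
  obtain k :: "'a \<Rightarrow> real" where k: "linear k" "\<And>x. x \<in> span S \<Longrightarrow> k x = 0" "\<And>w. w \<in> U \<Longrightarrow> k w \<noteq> 0"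
    using insert.IH insert.prems(2) by blast
  obtain y z where yz: "y \<in> span S" "\<And>w. w \<in> span S \<Longrightarrow> orthogonal z w" "u = y + z"
    using orthogonal_subspace_decomp_exists by blast
  have "z \<bullet> u = z \<bullet> z"
    using yz by (simp add: inner_add_right orthogonal_def)
  moreover have "z \<noteq> 0"
    using yz insert.prems(2) by auto
  ultimately have "z \<bullet> u \<noteq> 0"
    by simp
  obtain t :: real where t: "\<And>w. w \<in> insert u U \<Longrightarrow>
      sgn (k w + t * (z \<bullet> w)) = (if k w = 0 then sgn (z \<bullet> w) else sgn (k w))"
    using small_perturbation_sgn[of "insert u U" k id "inner z"] insert.hyps(1) by (metis finite_insert id_apply)
  show ?case
  proof (rule insert.prems(1)[of "\<lambda>x. k x + t * (z \<bullet> x)"])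
    show "linear (\<lambda>x. k x + t * (z \<bullet> x))"
      using k(1) by (simp add: linear_iff inner_add_right algebra_simps)
    show "k x + t * (z \<bullet> x) = 0" if "x \<in> span S" for x
      using k(2) yz(2) that by (simp add: orthogonal_def)
    show "k w + t * (z \<bullet> w) \<noteq> 0" if "w \<in> insert u U" for w
      using t[OF that] that k(3) \<open>z \<bullet> u \<noteq> 0\<close> by (auto simp: sgn_0_0 split: if_splits)
  qed
qed

lemma finite_disc_values:
  assumes "finite I"
  shows "finite {disc v I f | f. P f}"
proof (rule finite_subset[of _ "{..card I}"])
  have "disc v I f \<le> card I" for f
  proof -
    have "card {i \<in> I. f (v i) > 0} \<le> card I" "card {i \<in> I. f (v i) < 0} \<le> card I"
      using assms by (auto intro!: card_mono)
    then show ?thesis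
      unfolding disc_def nat_le_iff abs_le_iff by linarith
  qed
  then show "{disc v I f | f. P f} \<subseteq> {..card I}"
    by auto
qed simp

lemma disc_le_Max:
  assumes "finite I" "P f"
  shows "disc v I f \<le> Max {disc v I f | f. P f}"
  using assms finite_disc_values[OF assms(1)] by (auto intro!: Max_ge)

lemma Max_disc_attained:
  assumes "finite I" "P (\<lambda>_. 0)"
  obtains f where "P f" "disc v I f = Max {disc v I f | f. P f}"
proof -
  have "Max {disc v I f | f. P f} \<in> {disc v I f | f. P f}"
    using assms by (intro Max_in finite_disc_values) auto
  then show ?thesis
    unfolding mem_Collect_eq by (elim exE conjE) (rule that, simp_all)
qed

lemma DD_attained:
  fixes v :: "'i \<Rightarrow> 'a::real_vector"
  assumes "finite I"
  obtains f :: "'a \<Rightarrow> real" where "linear f" "signed_count v I f = DD v I"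
proof -
  obtain f0 :: "'a \<Rightarrow> real" where "linear f0" "disc v I f0 = DD v I"
    using Max_disc_attained[OF assms, of linear] linear_zero unfolding DD_def by blast
  with linear_sign_choice[OF \<open>linear f0\<close>, of v I] that show ?thesis
    by (metis disc_eq_abs_signed_count)
qed

lemma DD_quot_attained:
  fixes v :: "'i \<Rightarrow> 'a::real_vector"
  assumes "finite I"
  obtains g :: "'a \<Rightarrow> real" where "linear g" "\<And>x. x \<in> span (v ` J) \<Longrightarrow> g x = 0"
    "signed_count v (I - J) g = DD_quot v I J"
proof -
  obtain g0 :: "'a \<Rightarrow> real" where "linear g0 \<and> (\<forall>x \<in> span (v ` J). g0 x = 0)"
    "disc v (I - J) g0 = DD_quot v I J"
    using Max_disc_attained[of "I - J" "\<lambda>g. linear g \<and> (\<forall>x \<in> span (v ` J). g x = 0)" v]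
      assms linear_zero unfolding DD_quot_def by blast
  with linear_sign_choice[of g0 v "I - J"] that show ?thesis
    by (metis disc_eq_abs_signed_count)
qed

lemma DD_quot_attained_nonvanishing:
  fixes v :: "'i \<Rightarrow> 'a::euclidean_space"
  assumes "finite I" and closed: "\<forall>i \<in> I. v i \<in> span (v ` J) \<longrightarrow> i \<in> J"
  obtains g :: "'a \<Rightarrow> real" where "linear g" "\<And>x. x \<in> span (v ` J) \<Longrightarrow> g x = 0"
    "\<And>i. i \<in> I - J \<Longrightarrow> g (v i) \<noteq> 0" "signed_count v (I - J) g \<ge> DD_quot v I J"
proof -
  obtain g0 :: "'a \<Rightarrow> real" where g0: "linear g0" "\<And>x. x \<in> span (v ` J) \<Longrightarrow> g0 x = 0"
    "signed_count v (I - J) g0 = DD_quot v I J"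
    using DD_quot_attained[OF assms(1), where v = v and J = J] by blast
  have "finite (v ` (I - J))" "v ` (I - J) \<inter> span (v ` J) = {}"
    using assms by auto
  then obtain k0 :: "'a \<Rightarrow> real" where k0: "linear k0" "\<And>x. x \<in> span (v ` J) \<Longrightarrow> k0 x = 0"
    "\<And>u. u \<in> v ` (I - J) \<Longrightarrow> k0 u \<noteq> 0"
    using linear_functional_avoiding by blast
  define Z where "Z = {i \<in> I - J. g0 (v i) = 0}"
  \<comment> \<open>the sign of k is chosen so that it does not lower the count on the zeros of g0\<close>
  obtain k :: "'a \<Rightarrow> real" where k: "linear k" "signed_count v Z k = \<bar>signed_count v Z k0\<bar>"
    "\<And>x. k x = 0 \<longleftrightarrow> k0 x = 0"
    using linear_sign_choice[OF k0(1), where v = v and X = Z] by blast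
  obtain t :: real where t: "t > 0"
    "\<And>i. i \<in> I - J \<Longrightarrow> sgn (g0 (v i) + t * k (v i)) = (if g0 (v i) = 0 then sgn (k (v i)) else sgn (g0 (v i)))"
    "signed_count v (I - J) (\<lambda>x. g0 x + t * k x) = signed_count v (I - J) g0 + signed_count v Z k"
    using small_perturbation_signed_count[OF finite_Diff[OF assms(1)], where v = v and g = g0 and k = k]
    unfolding Z_def by blast
  show ?thesis
  proof (rule that[of "\<lambda>x. g0 x + t * k x"])
    show "linear (\<lambda>x. g0 x + t * k x)"
      using g0(1) k(1) by (simp add: linear_iff algebra_simps)
    show "g0 x + t * k x = 0" if "x \<in> span (v ` J)" for x
      using g0(2) k0(2) k(3) that by simp
    show "g0 (v i) + t * k (v i) \<noteq> 0" if "i \<in> I - J" for i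
      using t(2)[OF that] k0(3)[of "v i"] k(3)[of "v i"] that by (metis image_eqI sgn_eq_0_iff)
    show "signed_count v (I - J) (\<lambda>x. g0 x + t * k x) \<ge> DD_quot v I J"
      using t(3) g0(3) k(2) by simp
  qed
qed

lemma DD_ge_DD_add_DD_quot:
  fixes v :: "'i \<Rightarrow> 'a::euclidean_space"
  assumes "finite I" "J \<subseteq> I" "\<forall>i \<in> I. v i \<in> span (v ` J) \<longrightarrow> i \<in> J"
  shows "DD v J + DD_quot v I J \<le> DD v I"
proof -
  obtain f :: "'a \<Rightarrow> real" where f: "linear f" "signed_count v J f = DD v J"
    using DD_attained[OF finite_subset[OF assms(2,1)], where v = v] by blast
  obtain g :: "'a \<Rightarrow> real" where g: "linear g" "\<And>x. x \<in> span (v ` J) \<Longrightarrow> g x = 0"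
    "\<And>i. i \<in> I - J \<Longrightarrow> g (v i) \<noteq> 0" "signed_count v (I - J) g \<ge> DD_quot v I J"
    using DD_quot_attained_nonvanishing[OF assms(1,3)] by blast
  have zeros_of_g: "{i \<in> I. g (v i) = 0} = J" and nonzeros_of_g: "{i \<in> I. g (v i) \<noteq> 0} = I - J"
    using assms(2) g(2,3) span_base by blast+
  obtain s :: real where s:
    "signed_count v I (\<lambda>x. g x + s * f x) = signed_count v I g + signed_count v J f"
    using small_perturbation_signed_count[OF assms(1), where v = v and g = g and k = f]
    unfolding zeros_of_g by blast
  have "linear (\<lambda>x. g x + s * f x)"
    using g(1) f(1) by (simp add: linear_iff algebra_simps)
  then have "disc v I (\<lambda>x. g x + s * f x) \<le> DD v I"
    unfolding DD_def by (rule disc_le_Max[OF assms(1), where P = linear])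
  moreover have "signed_count v I g = signed_count v (I - J) g"
    using signed_count_restrict_nonzero[OF assms(1), of v g] unfolding nonzeros_of_g .
  ultimately show ?thesis
    using s f(2) g(4) disc_eq_abs_signed_count[of v I "\<lambda>x. g x + s * f x"] by linarith
qed

theorem mainTheorem11:
  fixes v :: "'i \<Rightarrow> real ^ 'n" and I J :: "'i set"
  assumes "finite I"
    and "J \<subseteq> I"
    and "\<forall>i \<in> I. v i \<in> span (v ` J) \<longrightarrow> i \<in> J"
  shows "DD v I \<ge> DD v J + DD_quot v I J"
  using DD_ge_DD_add_DD_quot[OF assms] .

end
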